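(* Let $(\Omega,\mathcal{F},\mathbf{P})$ be a probability space and $\theta\colon\Omega\to\Omega$ an ergodic automorphism of it. Let $A$ be an $N\times N$ matrix with all entries positive, and let $D(\omega)=\mathrm{diag}(d_1(\omega),\dots,d_N(\omega))$ be measurable in $\omega$ with $d_i(\omega)>0$ for all $i,\omega$ and $\ln^{+}\bigl(\max_i d_i(\cdot)\bigr)\in L_1(\Omega,\mathcal{F},\mathbf{P})$. Put $S(\omega)=AD(\omega)$, $S^{(n)}(\omega)=S(\theta^{n-1}\omega)\cdots S(\theta\omega)S(\omega)$, and let $\lambda$ be the top Lyapunov exponent of $\{S(\omega)\}_{\omega\in\Omega}$. Then there exist $\Omega_0\in\mathcal{F}$ with $\theta(\Omega_0)=\Omega_0$ and $\mathbf{P}(\Omega_0)=1$, a measurable mapping $w=(w_1,\dots,w_N)\colon\Omega_0\to\mathbb{R}^N$ with $w(\omega)$ a positive vector and $\|w(\omega)\|=1$ for all $\omega\in\Omega_0$, and a function $\rho\colon\Omega_0\to(0,\infty)$, such that $S(\omega)w(\omega)=\rho(\omega)w(\theta\omega)$ for all $\omega\in\Omega_0$, and $\lim_{n\to\infty}\frac1n\ln\|S^{(n)}(\omega)w(\omega)\|=\lambda$ for all $\omega\in\Omega_0$.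
   Context: An automorphism $\theta$ is ergodic if every $\theta$-invariant measurable set has probability $0$ or $1$. $\|\cdot\|$ denotes the Euclidean vector or matrix norm. The top Lyapunov exponent of $\{S(\omega)\}$ is the number $\lambda\in[-\infty,\infty)$ such that $\lambda=\lim_{n\to\infty}\frac1n\ln\|S^{(n)}(\omega)\|$ for a.e. $\omega$ (it exists when $\ln^+\|S(\cdot)\|\in L_1$). A vector is positive if all its coordinates are positive. *)

theory Defs
  imports "HOL-Probability.Probability"
begin

definition ergodic_automorphism :: "'a measure \<Rightarrow> ('a \<Rightarrow> 'a) \<Rightarrow> bool" where
  "ergodic_automorphism M T \<longleftrightarrow>
     bij_betw T (space M) (space M) \<and>
     T \<in> measurable M M \<and>
     the_inv_into (space M) T \<in> measurable M M \<and>
     (\<forall>A\<in>sets M. emeasure M (T -` A \<inter> space M) = emeasure M A) \<and>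
     (\<forall>A\<in>sets M. T -` A \<inter> space M = A \<longrightarrow> emeasure M A = 0 \<or> emeasure M A = 1)"

definition diag_mat :: "real ^ 'n \<Rightarrow> real ^ 'n ^ 'n" where
  "diag_mat d = (\<chi> i j. if i = j then d $ i else 0)"

fun cocycle :: "('a \<Rightarrow> 'a) \<Rightarrow> ('a \<Rightarrow> real ^ 'n ^ 'n) \<Rightarrow> nat \<Rightarrow> 'a \<Rightarrow> real ^ 'n ^ 'n" where
  "cocycle T S 0 x = mat 1"
| "cocycle T S (Suc n) x = S ((T ^^ n) x) ** cocycle T S n x"

text \<open>lambda (in [-infinity, infinity)) is the top Lyapunov exponent of the cocycle S over T:
  (1/n) ln ||S^(n)(w)|| tends to lambda for almost every w (norm = Euclidean norm of the matrix).\<close>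
definition top_lyapunov_exponent ::
  "'a measure \<Rightarrow> ('a \<Rightarrow> 'a) \<Rightarrow> ('a \<Rightarrow> real ^ 'n ^ 'n) \<Rightarrow> ereal \<Rightarrow> bool" where
  "top_lyapunov_exponent M T S l \<longleftrightarrow>
     l \<noteq> \<infinity> \<and>
     (AE x in M. (\<lambda>n. ereal (ln (norm (cocycle T S n x)) / real n)) \<longlonglongrightarrow> l)"

end

theory Submission
  imports Defs
begin

text \<open>Rows of \<open>S(\<omega>) = A D(\<omega>)\<close> are all comparable, with constants \<open>min A\<close> and \<open>max A\<close>, to the
  single row \<open>d(\<omega>)\<close>. Such a matrix contracts the oscillation of the ratio of two positive vectors
  by the fixed factor \<open>1 - min A / max A\<close> (Birkhoff's contraction, in elementary form). Hence the
  directions of \<open>S\<^sup>(\<^sup>n\<^sup>)(\<theta>\<^sup>-\<^sup>n \<omega>) 1\<close> converge, uniformly fast, to a positive unit vector \<open>w(\<omega>)\<close>,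
  and \<open>S(\<omega>) w(\<omega>)\<close> is a positive multiple \<open>\<rho>(\<omega>) w(\<theta> \<omega>)\<close>. Since the entries of \<open>w\<close> are uniformly bounded below,
  \<open>\<parallel>S\<^sup>(\<^sup>n\<^sup>)(\<omega>) w(\<omega>)\<parallel>\<close> and \<open>\<parallel>S\<^sup>(\<^sup>n\<^sup>)(\<omega>)\<parallel>\<close> differ by a bounded factor, so the growth rate along
  \<open>w\<close> is \<open>\<lambda>\<close>; the set where this holds is \<open>\<theta>\<close>-invariant because one step of the cocycle only
  multiplies by \<open>\<rho>(\<omega>)\<close>. Ergodicity and the integrability of \<open>ln\<^sup>+ max d\<^sub>i\<close> only serve to make
  \<open>\<lambda>\<close> exist, which the statement assumes; the proof uses only that \<open>\<theta>\<close> is bimeasurable.\<close>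

section \<open>Positive vectors and directions\<close>

definition pos_vec :: "real^'n \<Rightarrow> bool" where
  "pos_vec x \<longleftrightarrow> (\<forall>k. x$k > 0)"

lemma pos_vec_nonzero: "pos_vec x \<Longrightarrow> x \<noteq> 0"
  by (auto simp: pos_vec_def)

lemma pos_vec_one: "pos_vec 1"
  by (simp add: pos_vec_def)

lemma norm_le_if_abs_nth_le:
  fixes x y :: "real^'n"
  assumes "\<And>i. \<bar>x$i\<bar> \<le> y$i"
  shows "norm x \<le> norm y"
  unfolding norm_vec_def
  by (rule L2_set_mono) (use assms in \<open>auto intro: order_trans[OF _ abs_ge_self]\<close>)

lemma norm_sgn_diff_le:
  fixes z w :: "'v::real_normed_vector"
  assumes w: "w \<noteq> 0" and zw: "norm (z - w) \<le> e * norm w"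
  shows "norm (sgn z - sgn w) \<le> 2 * e"
proof (cases "z = 0")
  case True
  then show ?thesis using zw w by (simp add: norm_sgn)
next
  case False
  have nz: "norm z > 0" and nw: "norm w > 0" using False w by auto
  define c where "c = (norm w - norm z) / (norm z * norm w)"
  have "c = 1 / norm z - 1 / norm w"
    using nz nw by (simp add: c_def field_simps)
  then have "sgn z - sgn w = (1 / norm w) *\<^sub>R (z - w) + c *\<^sub>R z"
    by (simp add: sgn_div_norm scaleR_diff_left scaleR_diff_right divide_inverse)
  then have "norm (sgn z - sgn w) \<le> norm ((1 / norm w) *\<^sub>R (z - w)) + norm (c *\<^sub>R z)"
    by (metis norm_triangle_ineq)
  also have "\<dots> = norm (z - w) / norm w + \<bar>norm w - norm z\<bar> / norm w"
    using nz nw by (simp add: c_def abs_mult)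
  also have "\<dots> \<le> 2 * (norm (z - w) / norm w)"
    using norm_triangle_ineq3[of w z] nw by (simp add: norm_minus_commute field_simps)
  also have "\<dots> \<le> 2 * e"
    using zw nw by (simp add: pos_divide_le_eq)
  finally show ?thesis .
qed

lemma norm_sgn_diff_le_ratio_bounds:
  fixes x y :: "real^'n"
  assumes x: "pos_vec x" and m: "m > 0"
    and bounds: "\<And>i. m * x$i \<le> y$i \<and> y$i \<le> M * x$i" and gap: "M - m \<le> e * m"
  shows "norm (sgn y - sgn x) \<le> 2 * e"
proof -
  have "norm (y - m *\<^sub>R x) \<le> norm ((M - m) *\<^sub>R x)"
    by (rule norm_le_if_abs_nth_le) (use bounds x in \<open>auto simp: pos_vec_def algebra_simps\<close>)
  also have "\<dots> \<le> e * norm (m *\<^sub>R x)"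
  proof -
    have "m * x$i \<le> M * x$i" for i
      using bounds[of i] by (meson order_trans)
    then have "m \<le> M"
      using x by (meson mult_le_cancel_right_pos pos_vec_def)
    then show ?thesis
      using gap m by (simp add: mult.assoc[symmetric] mult_right_mono)
  qed
  finally have "norm (sgn y - sgn (m *\<^sub>R x)) \<le> 2 * e"
    by (rule norm_sgn_diff_le[rotated]) (use m pos_vec_nonzero[OF x] in auto)
  then show ?thesis
    using m by (simp add: sgn_scaleR)
qed

section \<open>Matrices whose rows are comparable to one positive row\<close>

definition rows_comparable :: "real \<Rightarrow> real \<Rightarrow> real^'n \<Rightarrow> real^'n^'n \<Rightarrow> bool" where
  "rows_comparable a b u P \<longleftrightarrow> (\<forall>i k. a * u$k \<le> P$i$k \<and> P$i$k \<le> b * u$k)"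

lemma inner_pos_vec_pos: "pos_vec u \<Longrightarrow> pos_vec x \<Longrightarrow> u \<bullet> x > 0"
  unfolding inner_vec_def pos_vec_def by (rule sum_pos) auto

lemma rows_comparable_mult_vec_bounds:
  assumes P: "rows_comparable a b u P" and y: "\<And>k. y$k \<ge> 0"
  shows "a * (u \<bullet> y) \<le> (P *v y)$i \<and> (P *v y)$i \<le> b * (u \<bullet> y)"
  using P y unfolding rows_comparable_def inner_vec_def matrix_vector_mult_def sum_distrib_left
  by (auto intro!: sum_mono simp: mult.assoc[symmetric] intro: mult_right_mono)

lemma rows_comparable_mult_pos_vec:
  assumes "rows_comparable a b u P" "a > 0" "pos_vec u" "pos_vec y"
  shows "pos_vec (P *v y)"
  unfolding pos_vec_def
proof
  fix i
  have "0 < a * (u \<bullet> y)"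
    using assms(2) inner_pos_vec_pos[OF assms(3,4)] by simp
  also have "\<dots> \<le> (P *v y)$i"
    using rows_comparable_mult_vec_bounds[OF assms(1), of y i] assms(4)
    by (simp add: pos_vec_def less_imp_le)
  finally show "(P *v y)$i > 0" .
qed

lemma rows_comparable_mult_vec_ratio_bounds:
  assumes P: "rows_comparable a b u P" and ab: "0 < a" "a \<le> b"
    and u: "pos_vec u" and x: "pos_vec x" and y: "pos_vec y"
  defines "c \<equiv> (u \<bullet> y) / (u \<bullet> x)"
  shows "a / b * c * (P *v x)$i \<le> (P *v y)$i" and "(P *v y)$i \<le> c / (a / b) * (P *v x)$i"
proof -
  have X: "u \<bullet> x > 0" and Y: "u \<bullet> y > 0"
    using u x y inner_pos_vec_pos by auto
  have bx: "a * (u \<bullet> x) \<le> (P *v x)$i" "(P *v x)$i \<le> b * (u \<bullet> x)"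
    and by_: "a * (u \<bullet> y) \<le> (P *v y)$i" "(P *v y)$i \<le> b * (u \<bullet> y)"
    using rows_comparable_mult_vec_bounds[OF P] x y by (auto simp: pos_vec_def less_imp_le)
  have c: "c > 0"
    using X Y by (simp add: c_def)
  have "a / b * c * (P *v x)$i \<le> a / b * c * (b * (u \<bullet> x))"
    using bx ab c by (intro mult_left_mono) auto
  also have "\<dots> = a * (u \<bullet> y)"
    using X ab by (simp add: c_def)
  finally show "a / b * c * (P *v x)$i \<le> (P *v y)$i"
    using by_ by linarith
  have "b * (u \<bullet> y) = c / (a / b) * (a * (u \<bullet> x))"
    using X ab by (simp add: c_def field_simps)
  also have "\<dots> \<le> c / (a / b) * (P *v x)$i"
    using bx ab c by (intro mult_left_mono) auto
  finally show "(P *v y)$i \<le> c / (a / b) * (P *v x)$i"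
    using by_ by linarith
qed

lemma rows_comparable_raises_lower_ratio_bound:
  assumes P: "rows_comparable a b u P" and ab: "0 < a" "a \<le> b"
    and u: "pos_vec u" and x: "pos_vec x" and y: "\<And>k. m * x$k \<le> y$k"
  defines "c \<equiv> (u \<bullet> y) / (u \<bullet> x)"
  shows "m \<le> c" and "(m + a / b * (c - m)) * (P *v x)$i \<le> (P *v y)$i"
proof -
  have X: "u \<bullet> x > 0"
    using u x inner_pos_vec_pos by auto
  have "m * (u \<bullet> x) \<le> u \<bullet> y"
    unfolding inner_vec_def sum_distrib_left
    by (rule sum_mono) (use u y in \<open>auto simp: pos_vec_def mult.left_commute intro: mult_left_mono\<close>)
  then show mc: "m \<le> c"
    using X by (simp add: c_def pos_le_divide_eq)
  have Px: "(P *v x)$i \<le> b * (u \<bullet> x)"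
    using rows_comparable_mult_vec_bounds[OF P] x by (auto simp: pos_vec_def less_imp_le)
  have "a / b * (c - m) * (P *v x)$i \<le> a / b * (c - m) * (b * (u \<bullet> x))"
    using Px ab mc by (intro mult_left_mono) auto
  also have "\<dots> = a * (u \<bullet> y - m * (u \<bullet> x))"
    using X ab by (simp add: c_def field_simps)
  also have "\<dots> = (\<Sum>k\<in>UNIV. a * u$k * (y$k - m * x$k))"
    by (simp add: inner_vec_def sum_distrib_left sum_subtractf algebra_simps)
  also have "\<dots> \<le> (\<Sum>k\<in>UNIV. P$i$k * (y$k - m * x$k))"
    by (rule sum_mono) (use P y in \<open>auto simp: rows_comparable_def intro: mult_right_mono\<close>)
  also have "\<dots> = (P *v y)$i - m * (P *v x)$i"
    by (simp add: matrix_vector_mult_def sum_distrib_left sum_subtractf algebra_simps)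
  finally show "(m + a / b * (c - m)) * (P *v x)$i \<le> (P *v y)$i"
    by (simp add: algebra_simps)
qed

text \<open>The upper bound is the lower one applied to \<open>-y\<close>.\<close>
lemma rows_comparable_narrows_ratio_bounds:
  assumes P: "rows_comparable a b u P" and ab: "0 < a" "a \<le> b"
    and u: "pos_vec u" and x: "pos_vec x" and y: "\<And>k. m * x$k \<le> y$k \<and> y$k \<le> M * x$k"
  shows "\<exists>m' M'. m \<le> m' \<and> M' \<le> M \<and> M' - m' = (1 - a / b) * (M - m) \<and>
           (\<forall>i. m' * (P *v x)$i \<le> (P *v y)$i \<and> (P *v y)$i \<le> M' * (P *v x)$i)"
proof -
  define c where "c = (u \<bullet> y) / (u \<bullet> x)"
  have neg_y: "-M * x$k \<le> (-y)$k" for k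
    using y[of k] by simp
  have "u \<bullet> -y = - (u \<bullet> y)"
    by simp
  then have neg_c: "(u \<bullet> -y) / (u \<bullet> x) = -c"
    by (simp add: c_def)
  have low_y: "m * x$k \<le> y$k" for k
    using y by blast
  note lower = rows_comparable_raises_lower_ratio_bound[OF P ab u x low_y, folded c_def]
  have minus_y: "(P *v - y)$i = - (P *v y)$i" for i
    by (simp add: matrix_vector_mult_def sum_negf)
  note upper = rows_comparable_raises_lower_ratio_bound[OF P ab u x neg_y, unfolded neg_c minus_y]
  have k: "a \<ge> 0" "b \<ge> 0"
    using ab by simp_all
  show ?thesis
  proof (intro exI conjI allI)
    show "m \<le> m + a / b * (c - m)" "M - a / b * (M - c) \<le> M"
      using k lower(1) upper(1) by simp_all
    show "M - a / b * (M - c) - (m + a / b * (c - m)) = (1 - a / b) * (M - m)"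
      by (simp add: algebra_simps add_divide_distrib[symmetric])
    fix i
    show "(m + a / b * (c - m)) * (P *v x)$i \<le> (P *v y)$i"
      by (rule lower(2))
    show "(P *v y)$i \<le> (M - a / b * (M - c)) * (P *v x)$i"
      using upper(2)[of i] by (simp add: algebra_simps)
  qed
qed

lemma rows_comparable_sgn_mult_vec_lower:
  fixes P :: "real^'n^'n"
  assumes P: "rows_comparable a b u P" and ab: "0 < a" "a \<le> b"
    and u: "pos_vec u" and y: "pos_vec y"
  shows "a / (b * norm (1::real^'n)) \<le> sgn (P *v y)$i"
proof -
  define D where "D = u \<bullet> y"
  have D: "D > 0"
    using inner_pos_vec_pos[OF u y] by (simp add: D_def)
  have bnd: "a * D \<le> (P *v y)$j \<and> (P *v y)$j \<le> b * D" for j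
    using rows_comparable_mult_vec_bounds[OF P] y by (auto simp: D_def pos_vec_def less_imp_le)
  have "norm (P *v y) \<le> norm ((b * D) *\<^sub>R (1::real^'n))"
  proof (rule norm_le_if_abs_nth_le)
    fix j
    have "0 < a * D"
      using ab D by simp
    then show "\<bar>(P *v y)$j\<bar> \<le> ((b * D) *\<^sub>R (1::real^'n))$j"
      using bnd[of j] by simp
  qed
  then have upper: "norm (P *v y) \<le> b * D * norm (1::real^'n)"
    using ab D by simp
  have pos: "norm (P *v y) > 0"
    using pos_vec_nonzero[OF rows_comparable_mult_pos_vec[OF P ab(1) u y]] by simp
  have "a / (b * norm (1::real^'n)) = a * D / (b * D * norm (1::real^'n))"
    using D by simp
  also have "\<dots> \<le> a * D / norm (P *v y)"
    using pos upper ab D by (intro divide_left_mono) auto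
  also have "\<dots> \<le> (P *v y)$i / norm (P *v y)"
    using pos bnd[of i] by (intro divide_right_mono) auto
  finally show ?thesis
    by (simp add: sgn_div_norm divide_inverse_commute)
qed

section \<open>The limiting direction of a pulled-back cocycle\<close>

locale comparable_cocycle =
  fixes S :: "'a \<Rightarrow> real^'n^'n" and R :: "'a \<Rightarrow> 'a" and \<Omega> :: "'a set"
    and u :: "'a \<Rightarrow> real^'n" and a b :: real
  assumes R_closed: "z \<in> \<Omega> \<Longrightarrow> R z \<in> \<Omega>"
    and a_pos: "0 < a" and a_le_b: "a \<le> b"
    and S_rows_comparable: "z \<in> \<Omega> \<Longrightarrow> rows_comparable a b (u z) (S z)"
    and u_pos: "z \<in> \<Omega> \<Longrightarrow> pos_vec (u z)"
begin

lemma S_mult_pos_vec: "z \<in> \<Omega> \<Longrightarrow> pos_vec y \<Longrightarrow> pos_vec (S z *v y)"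
  using rows_comparable_mult_pos_vec S_rows_comparable a_pos u_pos by blast

text \<open>\<open>pullback n z y = S (R z) *v S (R\<^sup>2 z) *v \<dots> *v S (R\<^sup>n z) *v y\<close>; for \<open>R = T\<inverse>\<close> this is the
  cocycle over \<open>T\<close> of length \<open>n\<close> started at \<open>T\<^sup>-\<^sup>n z\<close>.\<close>
primrec pullback :: "nat \<Rightarrow> 'a \<Rightarrow> real^'n \<Rightarrow> real^'n" where
  "pullback 0 z y = y"
| "pullback (Suc n) z y = S (R z) *v pullback n (R z) y"

lemma pullback_pos_vec: "z \<in> \<Omega> \<Longrightarrow> pos_vec y \<Longrightarrow> pos_vec (pullback n z y)"
  by (induction n arbitrary: z) (auto intro: S_mult_pos_vec R_closed)

lemma pullback_add: "pullback (n + k) z y = pullback n z (pullback k ((R ^^ n) z) y)"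
  by (induction n arbitrary: z) (simp_all add: funpow_Suc_right del: funpow.simps)

lemma pullback_narrows_ratio_bounds:
  assumes "z \<in> \<Omega>" "pos_vec x" "\<And>k. m * x$k \<le> y$k \<and> y$k \<le> M * x$k"
  shows "\<exists>m' M'. m \<le> m' \<and> M' \<le> M \<and> M' - m' = (1 - a / b) ^ n * (M - m) \<and>
           (\<forall>i. m' * pullback n z x $ i \<le> pullback n z y $ i \<and>
                pullback n z y $ i \<le> M' * pullback n z x $ i)"
  using assms
proof (induction n arbitrary: z)
  case 0
  then show ?case
    by (intro exI[of _ m] exI[of _ M]) auto
next
  case (Suc n)
  have Rz: "R z \<in> \<Omega>"
    using Suc.prems(1) R_closed by blast
  obtain m1 M1 where IH: "m \<le> m1" "M1 \<le> M" "M1 - m1 = (1 - a / b) ^ n * (M - m)"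
    "\<And>i. m1 * pullback n (R z) x $ i \<le> pullback n (R z) y $ i \<and>
         pullback n (R z) y $ i \<le> M1 * pullback n (R z) x $ i"
    using Suc.IH[OF Rz Suc.prems(2,3)] by blast
  obtain m2 M2 where "m1 \<le> m2" "M2 \<le> M1" "M2 - m2 = (1 - a / b) * (M1 - m1)"
    "\<forall>i. m2 * pullback (Suc n) z x $ i \<le> pullback (Suc n) z y $ i \<and>
         pullback (Suc n) z y $ i \<le> M2 * pullback (Suc n) z x $ i"
    using rows_comparable_narrows_ratio_bounds[OF S_rows_comparable[OF Rz] a_pos a_le_b
        u_pos[OF Rz] pullback_pos_vec[OF Rz Suc.prems(2)] IH(4)]
    by auto
  then show ?case
    using IH by (intro exI[of _ m2] exI[of _ M2]) auto
qed

text \<open>After one step every pullback of \<open>1\<close> is within ratio \<open>(b/a)\<^sup>2\<close> of every other; the remaining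
  \<open>r\<close> steps contract that spread geometrically.\<close>
lemma pullback_one_ratio_bounds:
  assumes z: "z \<in> \<Omega>" and p: "Suc r \<le> p"
  shows "\<exists>m M. m > 0 \<and> M - m \<le> (1 - a / b) ^ r * ((b / a)\<^sup>2 - 1) * m \<and>
           (\<forall>i. m * pullback (Suc r) z 1 $ i \<le> pullback p z 1 $ i \<and>
                pullback p z 1 $ i \<le> M * pullback (Suc r) z 1 $ i)"
proof -
  define z' where "z' = R ((R ^^ r) z)"
  have z': "z' \<in> \<Omega>"
    unfolding z'_def using z by (induction r) (auto intro: R_closed)
  define y where "y = S z' *v pullback (p - Suc r) z' 1"
  define x where "x = S z' *v 1"
  have "pullback p z 1 = pullback r z (pullback (Suc (p - Suc r)) ((R ^^ r) z) 1)"
    using pullback_add[of r "Suc (p - Suc r)"] p by simp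
  then have p_eq: "pullback p z 1 = pullback r z y"
    by (simp add: y_def z'_def)
  have r_eq: "pullback (Suc r) z 1 = pullback r z x"
    using pullback_add[of r 1 z 1] by (simp add: x_def z'_def)
  define c where "c = (u z' \<bullet> pullback (p - Suc r) z' 1) / (u z' \<bullet> 1)"
  have c: "c > 0"
    using inner_pos_vec_pos[OF u_pos[OF z'] pullback_pos_vec[OF z' pos_vec_one]]
      inner_pos_vec_pos[OF u_pos[OF z'] pos_vec_one]
    by (simp add: c_def)
  have "\<And>k. a / b * c * x$k \<le> y$k \<and> y$k \<le> c / (a / b) * x$k"
    using rows_comparable_mult_vec_ratio_bounds[OF S_rows_comparable[OF z'] a_pos a_le_b
        u_pos[OF z'] pos_vec_one pullback_pos_vec[OF z' pos_vec_one]]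
    by (simp add: c_def x_def y_def)
  then obtain m M where mM: "a / b * c \<le> m" "M - m = (1 - a / b) ^ r * (c / (a / b) - a / b * c)"
    "\<forall>i. m * pullback r z x $ i \<le> pullback r z y $ i \<and> pullback r z y $ i \<le> M * pullback r z x $ i"
    using pullback_narrows_ratio_bounds[OF z S_mult_pos_vec[OF z' pos_vec_one, folded x_def]]
    by blast
  have ab: "0 < a / b" "a / b \<le> 1" "1 \<le> b / a"
    using a_pos a_le_b by auto
  have m: "m > 0"
    using mM(1) ab c by (smt (verit) mult_pos_pos)
  have "c / (a / b) - a / b * c = ((b / a)\<^sup>2 - 1) * (a / b * c)"
    using a_pos a_le_b by (simp add: field_simps power2_eq_square)
  also have "\<dots> \<le> ((b / a)\<^sup>2 - 1) * m"
    using mM(1) ab by (intro mult_left_mono) (auto simp: one_le_power)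
  finally have "M - m \<le> (1 - a / b) ^ r * (((b / a)\<^sup>2 - 1) * m)"
    unfolding mM(2) using ab by (intro mult_left_mono) auto
  then have "M - m \<le> (1 - a / b) ^ r * ((b / a)\<^sup>2 - 1) * m"
    by (simp add: mult.assoc)
  then show ?thesis
    unfolding p_eq r_eq using m mM(3) by blast
qed

lemma pullback_one_sgn_dist:
  assumes "z \<in> \<Omega>" "Suc r \<le> p"
  shows "dist (sgn (pullback p z 1)) (sgn (pullback (Suc r) z 1)) \<le> 2 * ((1 - a / b) ^ r * ((b / a)\<^sup>2 - 1))"
  using pullback_one_ratio_bounds[OF assms] pullback_pos_vec[OF assms(1) pos_vec_one]
  by (metis dist_norm norm_sgn_diff_le_ratio_bounds)

lemma pullback_one_sgn_Cauchy:
  assumes z: "z \<in> \<Omega>"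
  shows "Cauchy (\<lambda>n. sgn (pullback n z 1))"
proof (rule metric_CauchyI)
  fix e :: real
  assume e: "e > 0"
  have "\<bar>1 - a / b\<bar> < 1"
    using a_pos a_le_b by simp
  then have "(\<lambda>n. 2 * ((1 - a / b) ^ n * ((b / a)\<^sup>2 - 1))) \<longlonglongrightarrow> 2 * (0 * ((b / a)\<^sup>2 - 1))"
    by (intro tendsto_intros LIMSEQ_power_zero) simp
  then have "\<forall>\<^sub>F n in sequentially. 2 * ((1 - a / b) ^ n * ((b / a)\<^sup>2 - 1)) < e"
    using e by (intro order_tendstoD(2)) auto
  then obtain N where N: "\<And>n. n \<ge> N \<Longrightarrow> 2 * ((1 - a / b) ^ n * ((b / a)\<^sup>2 - 1)) < e"
    by (auto simp: eventually_sequentially)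
  have close: "dist (sgn (pullback p z 1)) (sgn (pullback q z 1)) < e" if "Suc N \<le> q" "q \<le> p" for p q
  proof -
    obtain r where r: "q = Suc r" "N \<le> r"
      using \<open>Suc N \<le> q\<close> by (cases q) auto
    show ?thesis
      using pullback_one_sgn_dist[OF z, of r p] N[OF r(2)] r \<open>q \<le> p\<close> by simp
  qed
  show "\<exists>M. \<forall>m\<ge>M. \<forall>n\<ge>M. dist (sgn (pullback m z 1)) (sgn (pullback n z 1)) < e"
    by (metis close dist_commute nle_le)
qed


definition w :: "'a \<Rightarrow> real^'n" where
  "w z = lim (\<lambda>n. sgn (pullback n z 1))"

lemma pullback_one_sgn_tendsto: "z \<in> \<Omega> \<Longrightarrow> (\<lambda>n. sgn (pullback n z 1)) \<longlonglongrightarrow> w z"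
  unfolding w_def using pullback_one_sgn_Cauchy Cauchy_convergent_iff convergent_LIMSEQ_iff by blast

lemma norm_w:
  assumes z: "z \<in> \<Omega>"
  shows "norm (w z) = 1"
proof -
  have "(\<lambda>n. norm (sgn (pullback n z 1))) \<longlonglongrightarrow> norm (w z)"
    by (intro tendsto_norm pullback_one_sgn_tendsto z)
  moreover have "(\<lambda>n. norm (sgn (pullback n z 1))) = (\<lambda>n. 1)"
    using pos_vec_nonzero[OF pullback_pos_vec[OF z pos_vec_one]] by (simp add: norm_sgn)
  ultimately show ?thesis
    using LIMSEQ_unique tendsto_const by metis
qed

lemma w_lower_bound:
  assumes z: "z \<in> \<Omega>"
  shows "a / (b * norm (1::real^'n)) \<le> w z $ i"
proof (rule LIMSEQ_le_const)
  show "(\<lambda>n. sgn (pullback n z 1) $ i) \<longlonglongrightarrow> w z $ i"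
    by (intro tendsto_vec_nth pullback_one_sgn_tendsto z)
  have Rz: "R z \<in> \<Omega>"
    using z R_closed by blast
  show "\<exists>N. \<forall>n\<ge>N. a / (b * norm (1::real^'n)) \<le> sgn (pullback n z 1) $ i"
  proof (intro exI[of _ 1] allI impI)
    fix n :: nat
    assume "n \<ge> 1"
    then obtain m where "n = Suc m"
      by (cases n) auto
    then show "a / (b * norm (1::real^'n)) \<le> sgn (pullback n z 1) $ i"
      using rows_comparable_sgn_mult_vec_lower[OF S_rows_comparable[OF Rz] a_pos a_le_b u_pos[OF Rz]
          pullback_pos_vec[OF Rz pos_vec_one]]
      by simp
  qed
qed

lemma w_pos_vec: "z \<in> \<Omega> \<Longrightarrow> pos_vec (w z)"
  unfolding pos_vec_def using w_lower_bound a_pos a_le_b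
  by (smt (verit) divide_pos_pos mult_pos_pos zero_less_norm_iff pos_vec_nonzero pos_vec_one)

lemma w_eq_sgn_S_mult_w:
  assumes z: "z \<in> \<Omega>"
  shows "w z = sgn (S (R z) *v w (R z))"
proof -
  have Rz: "R z \<in> \<Omega>"
    using z R_closed by blast
  have step: "sgn (pullback (Suc n) z 1) = sgn (S (R z) *v sgn (pullback n (R z) 1))" for n
  proof -
    have pos: "norm (pullback n (R z) 1) > 0"
      using pos_vec_nonzero[OF pullback_pos_vec[OF Rz pos_vec_one]] by simp
    then have "pullback n (R z) 1 = norm (pullback n (R z) 1) *\<^sub>R sgn (pullback n (R z) 1)"
      by (simp add: sgn_div_norm)
    then have "pullback (Suc n) z 1 = norm (pullback n (R z) 1) *\<^sub>R (S (R z) *v sgn (pullback n (R z) 1))"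
      by (metis pullback.simps(2) matrix_vector_mult_scaleR)
    then show ?thesis
      using pos by (simp add: sgn_scaleR)
  qed
  have "(\<lambda>n. sgn (pullback (Suc n) z 1)) \<longlonglongrightarrow> w z"
    using pullback_one_sgn_tendsto[OF z] by (rule LIMSEQ_Suc)
  then have "(\<lambda>n. sgn (S (R z) *v sgn (pullback n (R z) 1))) \<longlonglongrightarrow> w z"
    by (simp only: step)
  moreover have "(\<lambda>n. sgn (S (R z) *v sgn (pullback n (R z) 1))) \<longlonglongrightarrow> sgn (S (R z) *v w (R z))"
  proof (rule tendsto_sgn)
    show "(\<lambda>n. S (R z) *v sgn (pullback n (R z) 1)) \<longlonglongrightarrow> S (R z) *v w (R z)"
      by (rule bounded_linear.tendsto[OF matrix_vector_mul_bounded_linear pullback_one_sgn_tendsto[OF Rz]])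
    show "S (R z) *v w (R z) \<noteq> 0"
      using pos_vec_nonzero S_mult_pos_vec[OF Rz w_pos_vec[OF Rz]] by blast
  qed
  ultimately show ?thesis
    by (rule LIMSEQ_unique)
qed

end

section \<open>Growth rates\<close>

lemma cocycle_Suc_right: "cocycle T S (Suc n) x = cocycle T S n (T x) ** S x"
proof (induction n)
  case 0
  then show ?case
    by (simp add: matrix_mul_rid matrix_mul_lid)
next
  case (Suc n)
  have "cocycle T S (Suc (Suc n)) x = S ((T ^^ n) (T x)) ** cocycle T S (Suc n) x"
    by (simp add: funpow_Suc_right del: funpow.simps)
  also have "\<dots> = cocycle T S (Suc n) (T x) ** S x"
    by (subst Suc.IH) (simp add: matrix_mul_assoc)
  finally show ?case .
qed

lemma cocycle_nonneg:
  assumes closed: "\<And>x. x \<in> X \<Longrightarrow> T x \<in> X" and S: "\<And>x i k. x \<in> X \<Longrightarrow> 0 \<le> S x $ i $ k"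
    and x: "x \<in> X"
  shows "0 \<le> cocycle T S n x $ i $ k"
proof (induction n arbitrary: i k)
  case 0
  show ?case
    by (simp add: mat_def)
next
  case (Suc n)
  have "(T ^^ n) x \<in> X"
    using x by (induction n) (auto intro: closed)
  then show ?case
    using S Suc.IH by (auto simp: matrix_matrix_mult_def intro!: sum_nonneg)
qed

lemma nonneg_matrix_norm_mult_vec_bounds:
  fixes C :: "real^'n^'n" and v :: "real^'n"
  assumes C: "\<And>i k. C$i$k \<ge> 0" and v: "\<And>k. c \<le> v$k \<and> v$k \<le> 1" and c: "c > 0"
  shows "c * norm C \<le> norm (C *v v)" "norm (C *v v) \<le> real CARD('n) * real CARD('n) * norm C"
proof -
  define rs where "rs = (\<chi> i. \<Sum>k\<in>UNIV. C$i$k)"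
  have Cv: "(C *v v)$i = (\<Sum>k\<in>UNIV. C$i$k * v$k)" for i
    by (simp add: matrix_vector_mult_def)
  have "norm C \<le> norm rs"
    unfolding norm_vec_def[of C] norm_vec_def[of rs]
  proof (rule L2_set_mono)
    fix i
    have "norm (C$i) \<le> (\<Sum>k\<in>UNIV. \<bar>C$i$k\<bar>)"
      by (rule norm_le_l1_cart)
    then show "norm (C$i) \<le> norm (rs$i)"
      using C by (simp add: rs_def sum_nonneg)
  qed simp
  then have "c * norm C \<le> norm (c *\<^sub>R rs)"
    using c by simp
  also have "\<dots> \<le> norm (C *v v)"
  proof (rule norm_le_if_abs_nth_le)
    fix i
    have "c * rs$i = (\<Sum>k\<in>UNIV. C$i$k * c)"
      by (simp add: rs_def sum_distrib_left mult.commute)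
    also have "\<dots> \<le> (C *v v)$i"
      unfolding Cv by (rule sum_mono) (use C v in \<open>auto intro: mult_left_mono\<close>)
    finally show "\<bar>(c *\<^sub>R rs)$i\<bar> \<le> (C *v v)$i"
      using c C by (simp add: rs_def sum_nonneg)
  qed
  finally show "c * norm C \<le> norm (C *v v)" .
  have entry: "\<bar>C$i$k * v$k\<bar> \<le> norm C" for i k
  proof -
    have "\<bar>C$i$k * v$k\<bar> \<le> \<bar>C$i$k\<bar>"
      using v[of k] c by (simp add: abs_mult mult_left_le)
    also have "\<dots> \<le> norm C"
      by (meson component_le_norm_cart Finite_Cartesian_Product.norm_nth_le order_trans)
    finally show ?thesis .
  qed
  have "norm (C *v v) \<le> (\<Sum>i\<in>UNIV. \<bar>(C *v v)$i\<bar>)"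
    by (rule norm_le_l1_cart)
  also have "\<dots> \<le> (\<Sum>i\<in>(UNIV::'n set). \<Sum>k\<in>(UNIV::'n set). norm C)"
    unfolding Cv by (intro sum_mono order_trans[OF sum_abs]) (use entry in auto)
  finally show "norm (C *v v) \<le> real CARD('n) * real CARD('n) * norm C"
    by (simp add: mult.assoc)
qed

lemma nonneg_matrix_ln_norm_mult_vec_bound:
  fixes C :: "real^'n^'n" and v :: "real^'n"
  assumes C: "\<And>i k. C$i$k \<ge> 0" and v: "\<And>k. c \<le> v$k \<and> v$k \<le> 1" and c: "c > 0"
  shows "\<bar>ln (norm (C *v v)) - ln (norm C)\<bar> \<le> \<bar>ln c\<bar> + \<bar>ln (real CARD('n) * real CARD('n))\<bar>"
proof (cases "C = 0")
  case True
  then show ?thesis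
    by simp
next
  case False
  define N where "N = real CARD('n) * real CARD('n)"
  have N: "N > 0"
    by (simp add: N_def)
  have lower: "c * norm C \<le> norm (C *v v)" and upper: "norm (C *v v) \<le> N * norm C"
    using nonneg_matrix_norm_mult_vec_bounds[OF C v c] by (simp_all add: N_def)
  have pos: "c * norm C > 0"
    using False c by simp
  have "ln (c * norm C) \<le> ln (norm (C *v v))"
    using lower pos by (subst ln_le_cancel_iff) auto
  moreover have "ln (norm (C *v v)) \<le> ln (N * norm C)"
    using upper lower pos by (subst ln_le_cancel_iff) auto
  ultimately have "ln c + ln (norm C) \<le> ln (norm (C *v v))" "ln (norm (C *v v)) \<le> ln N + ln (norm C)"
    using c N False by (simp_all add: ln_mult)
  then show ?thesis
    unfolding N_def[symmetric]
    by (intro abs_leI) (use abs_ge_self[of "ln c"] abs_ge_minus_self[of "ln N"] in linarith,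
        use abs_ge_minus_self[of "ln c"] abs_ge_self[of "ln N"] in linarith)
qed

lemma ereal_tendsto_divide_bounded_diff:
  fixes f g :: "nat \<Rightarrow> real"
  assumes lim: "(\<lambda>n. ereal (f n / real n)) \<longlonglongrightarrow> l" and diff: "\<And>n. \<bar>g n - f n\<bar> \<le> C"
  shows "(\<lambda>n. ereal (g n / real n)) \<longlonglongrightarrow> l"
proof -
  have "(\<lambda>n. (g n - f n) / real n) \<longlonglongrightarrow> 0"
  proof (rule tendsto_sandwich[of "\<lambda>n. - C / real n" _ _ "\<lambda>n. C / real n"])
    have "- C \<le> g n - f n" "g n - f n \<le> C" for n
      using abs_le_D1[OF diff[of n]] abs_le_D2[OF diff[of n]] by linarith+
    then show "\<forall>\<^sub>F n in sequentially. - C / real n \<le> (g n - f n) / real n"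
      "\<forall>\<^sub>F n in sequentially. (g n - f n) / real n \<le> C / real n"
      by (intro always_eventually allI divide_right_mono; simp)+
    show "(\<lambda>n. - C / real n) \<longlonglongrightarrow> 0" "(\<lambda>n. C / real n) \<longlonglongrightarrow> 0"
      by (rule lim_const_over_n)+
  qed
  then have "(\<lambda>n. ereal (f n / real n) + ereal ((g n - f n) / real n)) \<longlonglongrightarrow> l + ereal 0"
    by (intro tendsto_add_ereal_general lim tendsto_ereal) auto
  then show ?thesis
    by (simp add: diff_divide_distrib)
qed

lemma ereal_tendsto_divide_Suc_iff:
  fixes f :: "nat \<Rightarrow> real"
  shows "(\<lambda>n. ereal (f n / real n)) \<longlonglongrightarrow> l \<longleftrightarrow> (\<lambda>n. ereal (f n / real (Suc n))) \<longlonglongrightarrow> l"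
proof -
  have rescale: "(\<lambda>n. ereal (f n / real (p n))) \<longlonglongrightarrow> l"
    if lim: "(\<lambda>n. ereal (f n / real (q n))) \<longlonglongrightarrow> l" and ratio: "(\<lambda>n. real (q n) / real (p n)) \<longlonglongrightarrow> 1"
      and pos: "\<And>n. n > 0 \<Longrightarrow> p n > 0 \<and> q n > 0" for p q :: "nat \<Rightarrow> nat"
  proof -
    have "(\<lambda>n. ereal (f n / real (q n)) * ereal (real (q n) / real (p n))) \<longlonglongrightarrow> l * ereal 1"
      by (rule tendsto_mult_ereal[OF lim]) (use tendsto_ereal[OF ratio] in auto)
    then have "(\<lambda>n. ereal (f n / real (q n)) * ereal (real (q n) / real (p n))) \<longlonglongrightarrow> l"
      by (simp add: one_ereal_def[symmetric])
    moreover have "\<forall>\<^sub>F n in sequentially.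
        ereal (f n / real (q n)) * ereal (real (q n) / real (p n)) = ereal (f n / real (p n))"
      using eventually_gt_at_top[of 0] by eventually_elim (use pos in simp)
    ultimately show ?thesis
      by (rule Lim_transform_eventually)
  qed
  show ?thesis
  proof
    assume "(\<lambda>n. ereal (f n / real n)) \<longlonglongrightarrow> l"
    then show "(\<lambda>n. ereal (f n / real (Suc n))) \<longlonglongrightarrow> l"
      by (rule rescale[where p=Suc and q="\<lambda>n. n"]) (use LIMSEQ_n_over_Suc_n in auto)
  next
    assume "(\<lambda>n. ereal (f n / real (Suc n))) \<longlonglongrightarrow> l"
    then show "(\<lambda>n. ereal (f n / real n)) \<longlonglongrightarrow> l"
      by (rule rescale[where p="\<lambda>n. n" and q=Suc]) (use LIMSEQ_Suc_n_over_n in auto)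
  qed
qed

lemma ereal_growth_rate_shift:
  fixes f g :: "nat \<Rightarrow> real"
  assumes "\<And>n. \<bar>f (Suc n) - g n\<bar> \<le> C"
  shows "(\<lambda>n. ereal (f n / real n)) \<longlonglongrightarrow> l \<longleftrightarrow> (\<lambda>n. ereal (g n / real n)) \<longlonglongrightarrow> l"
proof -
  have "(\<lambda>n. ereal (f n / real n)) \<longlonglongrightarrow> l \<longleftrightarrow> (\<lambda>n. ereal (f (Suc n) / real (Suc n))) \<longlonglongrightarrow> l"
    by (rule filterlim_sequentially_Suc[symmetric])
  also have "\<dots> \<longleftrightarrow> (\<lambda>n. ereal (f (Suc n) / real n)) \<longlonglongrightarrow> l"
    by (rule ereal_tendsto_divide_Suc_iff[symmetric])
  also have "\<dots> \<longleftrightarrow> (\<lambda>n. ereal (g n / real n)) \<longlonglongrightarrow> l"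
  proof
    assume "(\<lambda>n. ereal (f (Suc n) / real n)) \<longlonglongrightarrow> l"
    then show "(\<lambda>n. ereal (g n / real n)) \<longlonglongrightarrow> l"
      by (rule ereal_tendsto_divide_bounded_diff[where C=C]) (use assms in \<open>simp add: abs_minus_commute\<close>)
  next
    assume "(\<lambda>n. ereal (g n / real n)) \<longlonglongrightarrow> l"
    then show "(\<lambda>n. ereal (f (Suc n) / real n)) \<longlonglongrightarrow> l"
      by (rule ereal_tendsto_divide_bounded_diff[where C=C]) (use assms in simp)
  qed
  finally show ?thesis .
qed

section \<open>Positive matrices with a random diagonal factor\<close>

lemma borel_measurable_vec_iff:
  fixes f :: "'a \<Rightarrow> real^'n"
  shows "f \<in> borel_measurable M \<longleftrightarrow> (\<forall>i. (\<lambda>x. f x $ i) \<in> borel_measurable M)"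
  unfolding borel_measurable_euclidean_space[of f]
  by (auto simp: Basis_vec_def cart_eq_inner_axis)

lemma matrix_diag_mult_nth: "(A ** diag_mat e) $ i $ k = A$i$k * e$k"
  by (simp add: matrix_matrix_mult_def diag_mat_def if_distrib sum.delta cong: if_cong)

lemma borel_measurable_matrix_diag_mult_vec:
  fixes A :: "real^'n^'n"
  assumes e: "e \<in> borel_measurable M" and y: "y \<in> borel_measurable M"
  shows "(\<lambda>x. (A ** diag_mat (e x)) *v y x) \<in> borel_measurable M"
proof -
  have "(\<lambda>x. e x $ k) \<in> borel_measurable M" "(\<lambda>x. y x $ k) \<in> borel_measurable M" for k
    using e y borel_measurable_vec_iff by blast+
  then show ?thesis
    unfolding borel_measurable_vec_iff matrix_vector_mult_def matrix_diag_mult_nth by auto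
qed

locale positive_diagonal_cocycle = prob_space M
  for M :: "'a measure" and T :: "'a \<Rightarrow> 'a" and A :: "real^'n^'n" and d :: "'a \<Rightarrow> real^'n"
    and l :: ereal +
  assumes T_bij: "bij_betw T (space M) (space M)"
    and T_measurable: "T \<in> M \<rightarrow>\<^sub>M M"
    and T_inv_measurable: "the_inv_into (space M) T \<in> M \<rightarrow>\<^sub>M M"
    and A_pos: "\<And>i k. A $ i $ k > 0"
    and d_measurable: "d \<in> borel_measurable M"
    and d_pos: "\<And>x k. x \<in> space M \<Longrightarrow> d x $ k > 0"
    and lyapunov: "top_lyapunov_exponent M T (\<lambda>x. A ** diag_mat (d x)) l"
begin

definition S :: "'a \<Rightarrow> real^'n^'n" where
  "S = (\<lambda>x. A ** diag_mat (d x))"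

lemma A_diag_mult_eq_S: "A ** diag_mat (d x) = S x"
  by (simp add: S_def)

definition A_min :: real where
  "A_min = Min (range (\<lambda>(i, k). A $ i $ k))"

definition A_max :: real where
  "A_max = Max (range (\<lambda>(i, k). A $ i $ k))"

lemma A_min_le: "A_min \<le> A $ i $ k" and le_A_max: "A $ i $ k \<le> A_max"
  using rangeI[of "\<lambda>(i, k). A $ i $ k" "(i, k)"] by (auto simp: A_min_def A_max_def)

lemma A_min_pos: "A_min > 0"
proof -
  have "A_min \<in> range (\<lambda>(i, k). A $ i $ k)"
    unfolding A_min_def by (rule Min_in) auto
  then show ?thesis
    using A_pos by auto
qed

lemma T_in_space: "x \<in> space M \<Longrightarrow> T x \<in> space M"
  using measurable_space[OF T_measurable] .

lemma T_inv_T: "x \<in> space M \<Longrightarrow> the_inv_into (space M) T (T x) = x"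
  using the_inv_into_f_f[OF bij_betw_imp_inj_on[OF T_bij]] .

sublocale comparable_cocycle S "the_inv_into (space M) T" "space M" d A_min A_max
proof
  show "the_inv_into (space M) T z \<in> space M" if "z \<in> space M" for z
    using measurable_space[OF T_inv_measurable that] .
  show "0 < A_min" "A_min \<le> A_max"
    using A_min_pos A_min_le le_A_max order_trans by blast+
  show "rows_comparable A_min A_max (d z) (S z)" "pos_vec (d z)" if "z \<in> space M" for z
    using d_pos[OF that] A_min_le le_A_max
    by (auto simp: rows_comparable_def pos_vec_def S_def matrix_diag_mult_nth intro: mult_right_mono)
qed

lemma S_nonneg: "x \<in> space M \<Longrightarrow> 0 \<le> S x $ i $ k"
  using A_pos[of i k] d_pos[of x k] by (simp add: S_def matrix_diag_mult_nth)

definition \<rho> :: "'a \<Rightarrow> real" where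
  "\<rho> x = norm (S x *v w x)"

lemma S_mult_w:
  assumes x: "x \<in> space M"
  shows "\<rho> x > 0" and "S x *v w x = \<rho> x *\<^sub>R w (T x)"
proof -
  have nonzero: "S x *v w x \<noteq> 0"
    using pos_vec_nonzero[OF S_mult_pos_vec[OF x w_pos_vec[OF x]]] .
  then show "\<rho> x > 0"
    by (simp add: \<rho>_def)
  have "w (T x) = sgn (S x *v w x)"
    using w_eq_sgn_S_mult_w[OF T_in_space[OF x]] T_inv_T[OF x] by simp
  then show "S x *v w x = \<rho> x *\<^sub>R w (T x)"
    using nonzero by (simp add: \<rho>_def sgn_div_norm)
qed

lemma S_mult_measurable:
  assumes "f \<in> borel_measurable M" and "g \<in> M \<rightarrow>\<^sub>M M"
  shows "(\<lambda>x. S (g x) *v f x) \<in> borel_measurable M"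
  using borel_measurable_matrix_diag_mult_vec[OF measurable_compose[OF assms(2) d_measurable] assms(1)]
  by (simp add: S_def comp_def)

lemma w_measurable: "w \<in> borel_measurable M"
proof (rule borel_measurable_LIMSEQ_metric)
  have "(\<lambda>z. pullback n z 1) \<in> borel_measurable M" for n
  proof (induction n)
    case (Suc n)
    then show ?case
      unfolding pullback.simps
      by (intro S_mult_measurable T_inv_measurable measurable_compose[OF T_inv_measurable])
  qed simp
  then show "(\<lambda>z. sgn (pullback n z 1)) \<in> borel_measurable M" for n
    by measurable
  show "\<And>z. z \<in> space M \<Longrightarrow> (\<lambda>n. sgn (pullback n z 1)) \<longlonglongrightarrow> w z"
    by (rule pullback_one_sgn_tendsto)
qed

lemma cocycle_mult_w_measurable: "(\<lambda>x. cocycle T S n x *v w x) \<in> borel_measurable M"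
proof (induction n)
  case 0
  then show ?case
    using w_measurable by (simp add: matrix_vector_mul_lid)
next
  case (Suc n)
  then show ?case
    using S_mult_measurable[OF Suc measurable_compose_n[OF T_measurable]]
    by (simp add: matrix_vector_mul_assoc del: funpow.simps)
qed

definition \<Omega>0 :: "'a set" where
  "\<Omega>0 = {x \<in> space M. (\<lambda>n. ereal (ln (norm (cocycle T S n x *v w x)) / real n)) \<longlonglongrightarrow> l}"

lemma sets_\<Omega>0: "\<Omega>0 \<in> sets M"
proof -
  have [measurable]: "(\<lambda>x. ereal (ln (norm (cocycle T S n x *v w x)) / real n)) \<in> borel_measurable M" for n
    using cocycle_mult_w_measurable[of n] by measurable
  show ?thesis
    unfolding \<Omega>0_def tendsto_iff_Liminf_eq_Limsup[OF trivial_limit_sequentially] by measurable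
qed

lemma AE_\<Omega>0: "AE x in M. x \<in> \<Omega>0"
  using AE_space lyapunov[unfolded top_lyapunov_exponent_def, THEN conjunct2, folded S_def]
proof eventually_elim
  case (elim x)
  define c where "c = A_min / (A_max * norm (1::real^'n))"
  have c: "c > 0"
    using a_pos a_le_b by (simp add: c_def)
  have w_bounds: "c \<le> w x $ k \<and> w x $ k \<le> 1" for k
    using w_lower_bound[OF elim(1)] component_le_norm_cart[of "w x" k] norm_w[OF elim(1)]
    by (simp add: c_def)
  have "0 \<le> cocycle T S n x $ i $ k" for n i k
    by (rule cocycle_nonneg[OF T_in_space S_nonneg elim(1)])
  then have "\<bar>ln (norm (cocycle T S n x *v w x)) - ln (norm (cocycle T S n x))\<bar>
      \<le> \<bar>ln c\<bar> + \<bar>ln (real CARD('n) * real CARD('n))\<bar>" for n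
    by (rule nonneg_matrix_ln_norm_mult_vec_bound[OF _ w_bounds c])
  then have "(\<lambda>n. ereal (ln (norm (cocycle T S n x *v w x)) / real n)) \<longlonglongrightarrow> l"
    by (rule ereal_tendsto_divide_bounded_diff[OF elim(2)])
  then show ?case
    using elim(1) by (simp add: \<Omega>0_def)
qed

lemma measure_\<Omega>0: "measure M \<Omega>0 = 1"
proof -
  have "{x \<in> space M. x \<in> \<Omega>0} = \<Omega>0"
    using sets.sets_into_space[OF sets_\<Omega>0] by blast
  then show ?thesis
    using prob_Collect_eq_1[of "\<lambda>x. x \<in> \<Omega>0"] AE_\<Omega>0 sets_\<Omega>0 by simp
qed

lemma T_mem_\<Omega>0_iff:
  assumes x: "x \<in> space M"
  shows "T x \<in> \<Omega>0 \<longleftrightarrow> x \<in> \<Omega>0"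
proof -
  have "\<bar>ln (norm (cocycle T S (Suc n) x *v w x)) - ln (norm (cocycle T S n (T x) *v w (T x)))\<bar>
      \<le> \<bar>ln (\<rho> x)\<bar>" for n
  proof -
    have "cocycle T S (Suc n) x *v w x = cocycle T S n (T x) *v (S x *v w x)"
      by (simp only: cocycle_Suc_right matrix_vector_mul_assoc)
    also have "\<dots> = \<rho> x *\<^sub>R (cocycle T S n (T x) *v w (T x))"
      by (simp add: S_mult_w(2)[OF x] matrix_vector_mult_scaleR)
    finally show ?thesis
      using S_mult_w(1)[OF x] by (cases "cocycle T S n (T x) *v w (T x) = 0") (simp_all add: ln_mult)
  qed
  then have "x \<in> \<Omega>0 \<longleftrightarrow> T x \<in> \<Omega>0"
    unfolding \<Omega>0_def using x T_in_space[OF x]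
    by (simp add: ereal_growth_rate_shift[where C="\<bar>ln (\<rho> x)\<bar>"])
  then show ?thesis
    by simp
qed

lemma T_image_\<Omega>0: "T ` \<Omega>0 = \<Omega>0"
proof -
  have "\<Omega>0 \<subseteq> space M"
    by (auto simp: \<Omega>0_def)
  then show ?thesis
    using T_mem_\<Omega>0_iff bij_betw_imp_surj_on[OF T_bij] by force
qed

end

theorem proposition3p1:
  fixes M :: "'a measure" and T :: "'a \<Rightarrow> 'a"
    and A :: "real ^ 'n ^ 'n" and d :: "'a \<Rightarrow> real ^ 'n"
    and l :: ereal
  assumes "prob_space M"
    and "ergodic_automorphism M T"
    and "\<forall>i j. A $ i $ j > 0"
    and "d \<in> borel_measurable M"
    and "\<forall>x\<in>space M. \<forall>i. d x $ i > 0"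
    and "integrable M (\<lambda>x. max 0 (ln (Max (range (\<lambda>i. d x $ i)))))"
    and "top_lyapunov_exponent M T (\<lambda>x. A ** diag_mat (d x)) l"
  shows "\<exists>\<Omega>0 w \<rho>.
           \<Omega>0 \<in> sets M \<and> T ` \<Omega>0 = \<Omega>0 \<and> measure M \<Omega>0 = 1 \<and>
           w \<in> borel_measurable (restrict_space M \<Omega>0) \<and>
           (\<forall>x\<in>\<Omega>0. (\<forall>i. w x $ i > 0) \<and> norm (w x) = 1) \<and>
           (\<forall>x\<in>\<Omega>0. \<rho> x > (0::real)) \<and>
           (\<forall>x\<in>\<Omega>0. (A ** diag_mat (d x)) *v w x = \<rho> x *\<^sub>R w (T x)) \<and>
           (\<forall>x\<in>\<Omega>0. (\<lambda>n. ereal (ln (norm (cocycle T (\<lambda>y. A ** diag_mat (d y)) n x *v w x)) / real n))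
                        \<longlonglongrightarrow> l)"
proof -
  have "bij_betw T (space M) (space M)" "T \<in> M \<rightarrow>\<^sub>M M" "the_inv_into (space M) T \<in> M \<rightarrow>\<^sub>M M"
    using assms(2) unfolding ergodic_automorphism_def by auto
  then interpret positive_diagonal_cocycle M T A d l
    using assms(3-5,7)
    by (intro positive_diagonal_cocycle.intro assms(1) positive_diagonal_cocycle_axioms.intro) auto
  have \<Omega>0_space: "\<Omega>0 \<subseteq> space M"
    using sets.sets_into_space[OF sets_\<Omega>0] .
  show ?thesis
  proof (intro exI[of _ \<Omega>0] exI[of _ w] exI[of _ \<rho>] conjI ballI)
    show "\<Omega>0 \<in> sets M" "T ` \<Omega>0 = \<Omega>0" "measure M \<Omega>0 = 1"
      by (fact sets_\<Omega>0 T_image_\<Omega>0 measure_\<Omega>0)+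
    show "w \<in> borel_measurable (restrict_space M \<Omega>0)"
      by (rule measurable_restrict_space1[OF w_measurable])
    fix x
    assume x: "x \<in> \<Omega>0"
    then have "x \<in> space M"
      using \<Omega>0_space by blast
    then show "\<forall>i. w x $ i > 0" "norm (w x) = 1" "\<rho> x > 0"
      "(A ** diag_mat (d x)) *v w x = \<rho> x *\<^sub>R w (T x)"
      using w_pos_vec norm_w S_mult_w by (simp_all add: pos_vec_def A_diag_mult_eq_S)
    show "(\<lambda>n. ereal (ln (norm (cocycle T (\<lambda>y. A ** diag_mat (d y)) n x *v w x)) / real n)) \<longlonglongrightarrow> l"
      using x by (simp add: \<Omega>0_def A_diag_mult_eq_S)
  qed
qed

end
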